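(* Let $M$ be a $0/1$-matrix and let $B$ be a block of $M$ of size $r\times c$. Given the data structure $\bar{\Phi}(B)$, and given the set of entries of the left vertical boundary $\bar{B}^-$ that are reachable from $(1,1)$, one can determine in $O(r)$ time the set of entries of the right vertical boundary $\bar{B}^+$ that are reachable from $(1,1)$.
   Context: Entries of $M$ are indexed $(a,b)$, rows increasing from bottom to top, columns left to right. A path from $(k,l)$ to $(i,j)$ is a sequence of $1$-entries starting at $(k,l)$ and ending at $(i,j)$ in which each step goes from $(a,b)$ to $(a+1,b)$, $(a,b+1)$ or $(a+1,b+1)$; $(i,j)$ is reachable from $(k,l)$ if such a path exists. A block $B$ is the submatrix formed by rows $r^-\le a\le r^+$ and columns $s^-\le b\le s^+$ ($r=r^+-r^-+1$, $c=s^+-s^-+1$). Its left vertical boundary $\bar{B}^-$ is the set of entries of column $s^-$ in $B$, and its right vertical boundary $\bar{B}^+$ is the set of entries of column $s^+$ in $B$, each ordered by increasing row. The data structure $\bar{\Phi}(B)$ stores: (1) for each $1$-entry $i$ of $\bar{B}^-$, the first entry $\bar{\sigma}_A(i)$ and the last entry $\bar{\sigma}_Z(i)$ of $\bar{B}^+$ reachable from $i$; (2) for each $1$-entry $j$ of $\bar{B}^+$, a flag $\bar{f}(j)$ indicating whether $j$ is reachable from some entry of $\bar{B}^-$, a list $\bar{L}_A(j)$ of the $1$-entries $i\in\bar{B}^-$ with $\bar{\sigma}_A(i)=j$, and a list $\bar{L}_Z(j)$ of the $1$-entries $i\in\bar{B}^-$ with $\bar{\sigma}_Z(i)=j$. Running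 time is in the RAM model.
   Formalization: The entries of $\bar{B}^+$ determined are those reached from (1,1) by a path to an entry of $\bar{B}^-$ followed by a path inside B, and reachability in $\bar{\Phi}(B)$ means by paths inside B. Apart from conventions, each condition added here is assumed in the paper as well or is needed for the statement above to hold. *)

theory Defs
  imports Main
begin

text \<open>A 0/1-matrix with m rows and n columns is modelled as M :: nat => nat => bool,
  where M a b = True means that entry (a,b) is a 1-entry; rows and columns are
  indexed from 1 (row 1 is the bottom row).  Entries outside 1..m x 1..n are ignored.\<close>

inductive reach :: "(nat \<times> nat \<Rightarrow> bool) \<Rightarrow> nat \<times> nat \<Rightarrow> nat \<times> nat \<Rightarrow> bool"
  for ok :: "nat \<times> nat \<Rightarrow> bool" where
  refl: "ok x \<Longrightarrow> reach ok x x"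
| step: "reach ok x (a, b) \<Longrightarrow> ok y \<Longrightarrow> y \<in> {(a+1, b), (a, b+1), (a+1, b+1)} \<Longrightarrow> reach ok x y"

definition okM :: "(nat \<Rightarrow> nat \<Rightarrow> bool) \<Rightarrow> nat \<Rightarrow> nat \<Rightarrow> nat \<times> nat \<Rightarrow> bool" where
  "okM M m n p = (1 \<le> fst p \<and> fst p \<le> m \<and> 1 \<le> snd p \<and> snd p \<le> n \<and> M (fst p) (snd p))"

definition okB :: "(nat \<Rightarrow> nat \<Rightarrow> bool) \<Rightarrow> nat \<Rightarrow> nat \<Rightarrow> nat \<Rightarrow> nat \<Rightarrow> nat \<times> nat \<Rightarrow> bool" where
  "okB M rl rh sl sh p = (rl \<le> fst p \<and> fst p \<le> rh \<and> sl \<le> snd p \<and> snd p \<le> sh \<and> M (fst p) (snd p))"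

text \<open>Boundary entries are addressed by their offset k (0 \<le> k < r) from the bottom row rl
  of the block: entry k of the left boundary is (rl+k, sl), entry k of the right
  boundary is (rl+k, sh).\<close>

definition reaches_right :: "(nat \<Rightarrow> nat \<Rightarrow> bool) \<Rightarrow> nat \<Rightarrow> nat \<Rightarrow> nat \<Rightarrow> nat \<Rightarrow> nat \<Rightarrow> nat \<Rightarrow> bool" where
  "reaches_right M rl rh sl sh k q = reach (okB M rl rh sl sh) (rl + k, sl) (rl + q, sh)"

text \<open>Part (1): for each left-boundary entry k, Some (sigma_A, sigma_Z) (offsets of the first
  and last reachable right-boundary entries) if it is a 1-entry reaching some right-boundary
  entry, None otherwise.\<close>
definition phi_sigma :: "(nat \<Rightarrow> nat \<Rightarrow> bool) \<Rightarrow> nat \<Rightarrow> nat \<Rightarrow> nat \<Rightarrow> nat \<Rightarrow> (nat \<times> nat) option list" where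
  "phi_sigma M rl rh sl sh =
    (let r = rh + 1 - rl in
     map (\<lambda>k. if M (rl + k) sl \<and> (\<exists>q<r. reaches_right M rl rh sl sh k q)
               then Some (LEAST q. q < r \<and> reaches_right M rl rh sl sh k q,
                          GREATEST q. q < r \<and> reaches_right M rl rh sl sh k q)
               else None) [0..<r])"

definition phi_f :: "(nat \<Rightarrow> nat \<Rightarrow> bool) \<Rightarrow> nat \<Rightarrow> nat \<Rightarrow> nat \<Rightarrow> nat \<Rightarrow> bool list" where
  "phi_f M rl rh sl sh =
    (let r = rh + 1 - rl in
     map (\<lambda>q. M (rl + q) sh \<and> (\<exists>k<r. reaches_right M rl rh sl sh k q)) [0..<r])"

definition phi_LA :: "(nat \<Rightarrow> nat \<Rightarrow> bool) \<Rightarrow> nat \<Rightarrow> nat \<Rightarrow> nat \<Rightarrow> nat \<Rightarrow> nat list list" where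
  "phi_LA M rl rh sl sh =
    (let r = rh + 1 - rl; sg = phi_sigma M rl rh sl sh in
     map (\<lambda>q. filter (\<lambda>k. map_option fst (sg ! k) = Some q) [0..<r]) [0..<r])"

definition phi_LZ :: "(nat \<Rightarrow> nat \<Rightarrow> bool) \<Rightarrow> nat \<Rightarrow> nat \<Rightarrow> nat \<Rightarrow> nat \<Rightarrow> nat list list" where
  "phi_LZ M rl rh sl sh =
    (let r = rh + 1 - rl; sg = phi_sigma M rl rh sl sh in
     map (\<lambda>q. filter (\<lambda>k. map_option snd (sg ! k) = Some q) [0..<r]) [0..<r])"

type_synonym phi_data = "(nat \<times> nat) option list \<times> bool list \<times> nat list list \<times> nat list list"

definition Phi :: "(nat \<Rightarrow> nat \<Rightarrow> bool) \<Rightarrow> nat \<Rightarrow> nat \<Rightarrow> nat \<Rightarrow> nat \<Rightarrow> phi_data" where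
  "Phi M rl rh sl sh = (phi_sigma M rl rh sl sh, phi_f M rl rh sl sh,
                        phi_LA M rl rh sl sh, phi_LZ M rl rh sl sh)"

definition left_reach :: "(nat \<Rightarrow> nat \<Rightarrow> bool) \<Rightarrow> nat \<Rightarrow> nat \<Rightarrow> nat \<Rightarrow> nat \<Rightarrow> nat \<Rightarrow> nat \<Rightarrow> bool list" where
  "left_reach M m n rl rh sl sh =
     map (\<lambda>k. reach (okM M m n) (1, 1) (rl + k, sl)) [0..<rh + 1 - rl]"

fun collect :: "(nat \<times> nat) option list \<Rightarrow> bool list \<Rightarrow> (nat \<times> nat) list" where
  "collect [] s = []"
| "collect (x # sg) s =
     (case s of [] \<Rightarrow> []
      | b # s' \<Rightarrow> (if b then (case x of None \<Rightarrow> collect sg s' | Some iv \<Rightarrow> iv # collect sg s')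
                  else collect sg s'))"

fun sweep :: "nat \<Rightarrow> (nat \<times> nat) list \<Rightarrow> bool list \<Rightarrow> bool list" where
  "sweep j ivs [] = []"
| "sweep j [] (b # fs) = False # sweep (j + 1) [] fs"
| "sweep j ((a, z) # ivs) (b # fs) =
     (if z < j then sweep j ivs (b # fs)
      else (b \<and> a \<le> j) # sweep (j + 1) ((a, z) # ivs) fs)"

fun right_reach_alg :: "phi_data \<Rightarrow> bool list \<Rightarrow> bool list" where
  "right_reach_alg (sg, f, la, lz) s = sweep 0 (collect sg s) f"

text \<open>Running time, counted as in the convention of HOL-Library Time_Functions:
  each function call costs one unit plus the cost of the calls it makes
  (constant-time primitive operations on numbers, booleans and list constructors are free).\<close>

fun T_collect :: "(nat \<times> nat) option list \<Rightarrow> bool list \<Rightarrow> nat" where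
  "T_collect [] s = 1"
| "T_collect (x # sg) s =
     (case s of [] \<Rightarrow> 1
      | b # s' \<Rightarrow> T_collect sg s' + 1)"

fun T_sweep :: "nat \<Rightarrow> (nat \<times> nat) list \<Rightarrow> bool list \<Rightarrow> nat" where
  "T_sweep j ivs [] = 1"
| "T_sweep j [] (b # fs) = T_sweep (j + 1) [] fs + 1"
| "T_sweep j ((a, z) # ivs) (b # fs) =
     (if z < j then T_sweep j ivs (b # fs)
      else T_sweep (j + 1) ((a, z) # ivs) fs) + 1"

fun T_right_reach_alg :: "phi_data \<Rightarrow> bool list \<Rightarrow> nat" where
  "T_right_reach_alg (sg, f, la, lz) s = T_collect sg s + T_sweep 0 (collect sg s) f + 1"

end

theory Submission
  imports Defs
begin

text \<open>Monotone paths inside a block cannot cross without meeting.  Hence if the left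
  boundary entry k reaches the right boundary entry q, and some k' \<ge> k reaches some q' \<le> q,
  then k reaches q' and k' reaches q.  Two consequences: the right boundary entries reached
  from k are exactly those in the interval [sigma_A(k), sigma_Z(k)] that are reached from
  anywhere (flag f), and sigma_A is monotone in k.  So the algorithm lists the intervals of the
  left entries reachable from (1,1), already sorted by left endpoint, and decides every right
  entry in one sweep that discards an interval once it ends below the current row; both passes
  take O(r) steps.\<close>

lemma reach_source_ok: "reach ok x y \<Longrightarrow> ok x"
  by (induction rule: reach.induct) auto

lemma reach_target_ok: "reach ok x y \<Longrightarrow> ok y"
  by (induction rule: reach.induct) auto

lemma reach_coordinates_le: "reach ok x y \<Longrightarrow> fst x \<le> fst y \<and> snd x \<le> snd y"
  by (induction rule: reach.induct) auto

lemma reach_trans: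
  assumes "reach ok x y" "reach ok y z"
  shows "reach ok x z"
  using assms(2,1) by (induction rule: reach.induct) (auto intro: reach.step)

lemma reach_first_step:
  assumes "reach ok x y" "x \<noteq> y"
  shows "\<exists>p \<in> {(fst x + 1, snd x), (fst x, snd x + 1), (fst x + 1, snd x + 1)}. reach ok p y"
  using assms
proof (induction rule: reach.induct)
  case (step x0 a b y)
  show ?case
  proof (cases "x0 = (a, b)")
    case True
    then show ?thesis using step.hyps(2,3) by (auto intro: reach.refl)
  next
    case False
    then obtain p where "p \<in> {(fst x0 + 1, snd x0), (fst x0, snd x0 + 1), (fst x0 + 1, snd x0 + 1)}"
        "reach ok p (a, b)"
      using step.IH by blast
    then show ?thesis using step.hyps(2,3) reach.step by blast
  qed
qed simp

lemma reach_prepend: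
  assumes "ok (a, b)" "p \<in> {(a + 1, b), (a, b + 1), (a + 1, b + 1)}" "reach ok p y"
  shows "reach ok (a, b) y"
  using assms reach.step[OF reach.refl] reach_source_ok reach_trans by metis

lemma reach_paths_meet:
  assumes "reach ok (x, a) (x', c)" "reach ok (y, b) (y', c)" "b \<le> a" "x \<le> y" "y' \<le> x'"
  shows "\<exists>z. reach ok (x, a) z \<and> reach ok z (x', c) \<and> reach ok (y, b) z \<and> reach ok z (y', c)"
  using assms
proof (induction "(c - a) + (x' - x) + (c - b) + (y' - y)" arbitrary: x a y b rule: less_induct)
  \<comment> \<open>Advance the path that is behind: the second one while it starts strictly left of the
    first, otherwise the first one, which then starts strictly below the second.\<close>
  case less
  have "a \<le> c" "x \<le> x'" "b \<le> c" "y \<le> y'"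
    using reach_coordinates_le[OF less.prems(1)] reach_coordinates_le[OF less.prems(2)] by auto
  consider "(x, a) = (y, b)" | "b < a" | "b = a" "x < y"
    using less.prems(3,4) by fastforce
  then show ?case
  proof cases
    case 1
    then show ?thesis using less.prems(1,2) reach_source_ok reach.refl by metis
  next
    case 2
    then obtain y1 b1 where p: "(y1, b1) \<in> {(y + 1, b), (y, b + 1), (y + 1, b + 1)}"
        "reach ok (y1, b1) (y', c)"
      using reach_first_step[OF less.prems(2)] \<open>a \<le> c\<close> by force
    have "(c - a) + (x' - x) + (c - b1) + (y' - y1) < (c - a) + (x' - x) + (c - b) + (y' - y)"
      using p(1) reach_coordinates_le[OF p(2)] by auto
    moreover have "b1 \<le> a" "x \<le> y1"
      using p(1) 2 less.prems(4) by auto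
    ultimately obtain z where
      "reach ok (x, a) z" "reach ok z (x', c)" "reach ok (y1, b1) z" "reach ok z (y', c)"
      using less.hyps less.prems(1,5) p(2) by blast
    then show ?thesis
      using reach_prepend[where ok = ok, OF reach_source_ok[OF less.prems(2)] p(1)] by blast
  next
    case 3
    then obtain x1 a1 where p: "(x1, a1) \<in> {(x + 1, a), (x, a + 1), (x + 1, a + 1)}"
        "reach ok (x1, a1) (x', c)"
      using reach_first_step[OF less.prems(1)] \<open>y \<le> y'\<close> less.prems(5) by force
    have "(c - a1) + (x' - x1) + (c - b) + (y' - y) < (c - a) + (x' - x) + (c - b) + (y' - y)"
      using p(1) reach_coordinates_le[OF p(2)] by auto
    moreover have "b \<le> a1" "x1 \<le> y"
      using p(1) 3 by auto
    ultimately obtain z where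
      "reach ok (x1, a1) z" "reach ok z (x', c)" "reach ok (y, b) z" "reach ok z (y', c)"
      using less.hyps less.prems(2,5) p(2) by blast
    then show ?thesis
      using reach_prepend[where ok = ok, OF reach_source_ok[OF less.prems(1)] p(1)] by blast
  qed
qed

definition noncrossing :: "(nat \<Rightarrow> nat \<Rightarrow> bool) \<Rightarrow> bool" where
  "noncrossing R \<longleftrightarrow>
     (\<forall>k k' q q'. R k q \<longrightarrow> R k' q' \<longrightarrow> k \<le> k' \<longrightarrow> q' \<le> q \<longrightarrow> R k q' \<and> R k' q)"

lemma noncrossingD:
  "noncrossing R \<Longrightarrow> R k q \<Longrightarrow> R k' q' \<Longrightarrow> k \<le> k' \<Longrightarrow> q' \<le> q \<Longrightarrow> R k q' \<and> R k' q"
  unfolding noncrossing_def by blast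

lemma noncrossing_reaches_right: "noncrossing (reaches_right M rl rh sl sh)"
  unfolding noncrossing_def reaches_right_def
proof (intro allI impI)
  let ?ok = "okB M rl rh sl sh"
  fix k k' q q'
  assume "reach ?ok (rl + k, sl) (rl + q, sh)" "reach ?ok (rl + k', sl) (rl + q', sh)"
    "k \<le> k'" "q' \<le> q"
  then obtain z where "reach ?ok (rl + k, sl) z" "reach ?ok z (rl + q, sh)"
    "reach ?ok (rl + k', sl) z" "reach ?ok z (rl + q', sh)"
    using reach_paths_meet[of ?ok "rl + k" sl "rl + q" sh "rl + k'" sl "rl + q'"] by auto
  then show "reach ?ok (rl + k, sl) (rl + q', sh) \<and> reach ?ok (rl + k', sl) (rl + q, sh)"
    using reach_trans by blast
qed

lemma noncrossing_Least_mono: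
  assumes "noncrossing R" "R k q" "R k' q'" "k \<le> k'"
  shows "Least (R k) \<le> Least (R k')"
proof (rule ccontr)
  assume "\<not> ?thesis"
  then have "Least (R k') \<le> Least (R k)" by simp
  moreover have "R k (Least (R k))" "R k' (Least (R k'))"
    using assms(2,3) by (metis LeastI)+
  ultimately have "R k (Least (R k'))"
    using noncrossingD[OF assms(1) _ _ assms(4)] by blast
  then have "Least (R k) \<le> Least (R k')"
    by (rule Least_le)
  with \<open>\<not> ?thesis\<close> show False ..
qed

lemma noncrossing_iff_Least_Greatest:
  assumes "noncrossing R" "R k q0" "\<And>q. R k q \<Longrightarrow> q \<le> b"
  shows "R k q \<longleftrightarrow> (\<exists>k'. R k' q) \<and> Least (R k) \<le> q \<and> q \<le> Greatest (R k)"
proof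
  assume "R k q"
  then show "(\<exists>k'. R k' q) \<and> Least (R k) \<le> q \<and> q \<le> Greatest (R k)"
    using assms(3) by (blast intro: Least_le Greatest_le_nat)
next
  assume "(\<exists>k'. R k' q) \<and> Least (R k) \<le> q \<and> q \<le> Greatest (R k)"
  then obtain k' where k': "R k' q" and q: "Least (R k) \<le> q" "q \<le> Greatest (R k)"
    by blast
  have "R k (Least (R k))" "R k (Greatest (R k))"
    using assms(2,3) by (metis LeastI, metis GreatestI_nat)
  show "R k q"
  proof (cases "k' \<le> k")
    case True
    then show ?thesis
      using noncrossingD[OF assms(1) k' \<open>R k (Least (R k))\<close> True q(1)] by blast
  next
    case False
    then show ?thesis
      using noncrossingD[OF assms(1) \<open>R k (Greatest (R k))\<close> k' _ q(2)] by simp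
  qed
qed

lemma length_sweep [simp]: "length (sweep j ivs fs) = length fs"
  by (induction j ivs fs rule: sweep.induct) auto

text \<open>Only the left endpoints need to be sorted: an interval is dropped only once it ends below
  the current row, and if the head interval starts above the current row, so do all others.\<close>

lemma nth_sweep:
  assumes "sorted (map fst ivs)" "i < length fs"
  shows "sweep j ivs fs ! i \<longleftrightarrow> fs ! i \<and> (\<exists>(a, z) \<in> set ivs. a \<le> j + i \<and> j + i \<le> z)"
  using assms
proof (induction j ivs fs arbitrary: i rule: sweep.induct)
  case (2 j b fs)
  then show ?case by (cases i) auto
next
  case (3 j a z ivs b fs)
  then show ?case by (cases i) (auto simp: nth_Cons')
qed simp

lemma set_collect:
  "set (collect sg s) = {iv. \<exists>k < length sg. k < length s \<and> s ! k \<and> sg ! k = Some iv}"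
proof (induction sg arbitrary: s)
  case (Cons x sg)
  then show ?case
    by (cases s) (auto simp: less_Suc_eq_0_disj split: option.splits)
qed simp

lemma sorted_wrt_collect:
  assumes "sorted_wrt (\<lambda>x y. \<forall>u \<in> set_option x. \<forall>v \<in> set_option y. R u v) sg"
  shows "sorted_wrt R (collect sg s)"
  using assms
proof (induction sg arbitrary: s)
  case (Cons x sg)
  have "R u w" if "x = Some u" "w \<in> set (collect sg s')" for u w s'
    using that Cons.prems by (auto simp: set_collect) (metis nth_mem option.set_intros)
  with Cons show ?case
    by (cases s) (auto split: option.splits)
qed simp

lemma length_collect_le: "length (collect sg s) \<le> length s"
  by (induction sg arbitrary: s) (auto split: list.splits option.splits intro: le_SucI)

lemma T_collect_le: "T_collect sg s \<le> length s + 1"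
  by (induction sg arbitrary: s) (auto split: list.splits)

lemma T_sweep_le: "T_sweep j ivs fs \<le> length ivs + length fs + 1"
  by (induction j ivs fs rule: sweep.induct) auto

context
  fixes M :: "nat \<Rightarrow> nat \<Rightarrow> bool" and rl rh sl sh :: nat
begin

lemma reaches_right_less:
  "reaches_right M rl rh sl sh k q \<Longrightarrow> k < rh + 1 - rl \<and> q < rh + 1 - rl"
  unfolding reaches_right_def using reach_source_ok reach_target_ok by (fastforce simp: okB_def)

lemma length_phi_sigma [simp]: "length (phi_sigma M rl rh sl sh) = rh + 1 - rl"
  by (simp add: phi_sigma_def Let_def)

lemma length_phi_f [simp]: "length (phi_f M rl rh sl sh) = rh + 1 - rl"
  by (simp add: phi_f_def Let_def)

lemma nth_phi_sigma:
  assumes "k < rh + 1 - rl"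
  shows "phi_sigma M rl rh sl sh ! k =
    (if \<exists>q. reaches_right M rl rh sl sh k q
     then Some (Least (reaches_right M rl rh sl sh k), Greatest (reaches_right M rl rh sl sh k))
     else None)"
proof -
  have "(\<lambda>q. q < rh + 1 - rl \<and> reaches_right M rl rh sl sh k q) = reaches_right M rl rh sl sh k"
    using reaches_right_less by blast
  moreover have "M (rl + k) sl" if "reaches_right M rl rh sl sh k q" for q
    using that reach_source_ok by (fastforce simp: reaches_right_def okB_def)
  ultimately show ?thesis
    using assms by (auto simp: phi_sigma_def Let_def)
qed

lemma nth_phi_f:
  assumes "q < rh + 1 - rl"
  shows "phi_f M rl rh sl sh ! q \<longleftrightarrow> (\<exists>k. reaches_right M rl rh sl sh k q)"
proof -
  have "M (rl + q) sh" if "reaches_right M rl rh sl sh k q" for k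
    using that reach_target_ok by (fastforce simp: reaches_right_def okB_def)
  then show ?thesis
    using assms reaches_right_less by (auto simp: phi_f_def Let_def)
qed

lemma sorted_phi_sigma_fst:
  "sorted_wrt (\<lambda>x y. \<forall>u \<in> set_option x. \<forall>v \<in> set_option y. fst u \<le> fst v)
     (phi_sigma M rl rh sl sh)"
  unfolding sorted_wrt_iff_nth_less
  using nth_phi_sigma noncrossing_Least_mono[OF noncrossing_reaches_right] by auto

lemma reaches_right_iff_in_sigma_interval:
  assumes "k < rh + 1 - rl" "q < rh + 1 - rl"
  shows "reaches_right M rl rh sl sh k q \<longleftrightarrow>
    phi_f M rl rh sl sh ! q \<and>
    (\<exists>a z. phi_sigma M rl rh sl sh ! k = Some (a, z) \<and> a \<le> q \<and> q \<le> z)"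
proof (cases "\<exists>q'. reaches_right M rl rh sl sh k q'")
  case True
  then obtain q' where "reaches_right M rl rh sl sh k q'" ..
  moreover have "q \<le> rh + 1 - rl" if "reaches_right M rl rh sl sh k q" for q
    using reaches_right_less[OF that] by simp
  ultimately have "reaches_right M rl rh sl sh k q \<longleftrightarrow> (\<exists>k'. reaches_right M rl rh sl sh k' q) \<and>
      Least (reaches_right M rl rh sl sh k) \<le> q \<and> q \<le> Greatest (reaches_right M rl rh sl sh k)"
    by (rule noncrossing_iff_Least_Greatest[OF noncrossing_reaches_right])
  then show ?thesis
    using True assms by (simp add: nth_phi_sigma nth_phi_f)
next
  case False
  then show ?thesis using assms(1) by (simp add: nth_phi_sigma)
qed

lemma length_right_reach_alg [simp]:
  "length (right_reach_alg (Phi M rl rh sl sh) s) = rh + 1 - rl"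
  by (simp add: Phi_def)

lemma nth_right_reach_alg:
  assumes "length s = rh + 1 - rl" "q < rh + 1 - rl"
  shows "right_reach_alg (Phi M rl rh sl sh) s ! q \<longleftrightarrow>
    (\<exists>k < rh + 1 - rl. s ! k \<and> reaches_right M rl rh sl sh k q)"
proof -
  let ?sg = "phi_sigma M rl rh sl sh" and ?f = "phi_f M rl rh sl sh"
  have "sorted_wrt (\<lambda>u v. fst u \<le> fst v) (collect ?sg s)"
    by (rule sorted_wrt_collect[OF sorted_phi_sigma_fst])
  then have "sorted (map fst (collect ?sg s))"
    by (simp add: sorted_map)
  from nth_sweep[OF this, of q ?f 0] assms(2)
  have "right_reach_alg (Phi M rl rh sl sh) s ! q \<longleftrightarrow>
      ?f ! q \<and> (\<exists>(a, z) \<in> set (collect ?sg s). a \<le> q \<and> q \<le> z)"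
    by (simp add: Phi_def)
  also have "\<dots> \<longleftrightarrow> (\<exists>k < rh + 1 - rl. s ! k \<and>
      ?f ! q \<and> (\<exists>a z. ?sg ! k = Some (a, z) \<and> a \<le> q \<and> q \<le> z))"
    using assms(1) by (auto simp: set_collect)
  also have "\<dots> \<longleftrightarrow> (\<exists>k < rh + 1 - rl. s ! k \<and> reaches_right M rl rh sl sh k q)"
    using assms(2) by (simp add: reaches_right_iff_in_sigma_interval cong: conj_cong)
  finally show ?thesis .
qed

lemma T_right_reach_alg_le:
  assumes "length s = rh + 1 - rl"
  shows "T_right_reach_alg (Phi M rl rh sl sh) s \<le> 3 * (rh + 1 - rl) + 3"
  using T_collect_le[of "phi_sigma M rl rh sl sh" s]
    T_sweep_le[of 0 "collect (phi_sigma M rl rh sl sh) s" "phi_f M rl rh sl sh"]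
    length_collect_le[of "phi_sigma M rl rh sl sh" s] assms
  by (simp add: Phi_def)

end

lemma length_left_reach [simp]: "length (left_reach M m n rl rh sl sh) = rh + 1 - rl"
  by (simp add: left_reach_def)

lemma nth_left_reach [simp]:
  "k < rh + 1 - rl \<Longrightarrow> left_reach M m n rl rh sl sh ! k = reach (okM M m n) (1, 1) (rl + k, sl)"
  by (simp add: left_reach_def)

lemma T_right_reach_alg_left_reach_le:
  assumes "rl \<le> rh"
  shows "T_right_reach_alg (Phi M rl rh sl sh) (left_reach M m n rl rh sl sh) \<le> 6 * (rh + 1 - rl)"
  using T_right_reach_alg_le[where s = "left_reach M m n rl rh sl sh"
      and M = M and rl = rl and rh = rh and sl = sl and sh = sh] assms
  by simp

theorem lemma4:
  "\<exists>c::nat. \<forall>(M::nat \<Rightarrow> nat \<Rightarrow> bool) m n rl rh sl sh.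
     1 \<le> rl \<and> rl \<le> rh \<and> rh \<le> m \<and> 1 \<le> sl \<and> sl \<le> sh \<and> sh \<le> n \<longrightarrow>
     (let r = rh + 1 - rl;
          inp = left_reach M m n rl rh sl sh;
          out = right_reach_alg (Phi M rl rh sl sh) inp
      in length out = r
         \<and> (\<forall>q<r. out ! q \<longleftrightarrow>
               (\<exists>k<r. reach (okM M m n) (1, 1) (rl + k, sl)
                      \<and> reach (okB M rl rh sl sh) (rl + k, sl) (rl + q, sh)))
         \<and> T_right_reach_alg (Phi M rl rh sl sh) inp \<le> c * r)"
  unfolding Let_def
  by (intro exI[of _ 6] allI impI conjI T_right_reach_alg_left_reach_le)
    (auto simp: nth_right_reach_alg reaches_right_def)

end
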